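(* Let $\mathcal{M}$ be a metric space whose underlying set is $\omega$, and let $\mathcal{C}(\mathcal{M})$ be its metric completion. Suppose $\mathcal{C}(\mathcal{M})$ is a proper Polish metric space (every closed ball $\{y : d(x,y)\le r\}$ is compact). Then $\mathrm{SR}(\mathcal{C}(\mathcal{M})) \leq \omega_1^{\mathcal{M}} + 1$.
   Context: The language of metric spaces is $\mathscr{U} = \{\dot d_q, \dot d^q : q \in \mathbb{Q}^+\}$ with binary relation symbols, interpreted in a metric space by $\dot d_q(x,y) \Leftrightarrow d(x,y) < q$ and $\dot d^q(x,y) \Leftrightarrow d(x,y) > q$. For a structure $\mathcal{N}$ and tuples $\bar a=(a_0,\dots,a_{p-1})$, $\bar b=(b_0,\dots,b_{p-1})$ from $\mathcal{N}$ of equal length: $\bar a \sim_0 \bar b$ iff $a_i\mapsto b_i$ ($i<p$) is a partial $\mathscr{U}$-isomorphism; $\bar a \sim_{\alpha+1}\bar b$ iff for every $a\in\mathcal{N}$ there is $b\in\mathcal{N}$ with $\bar a a\sim_\alpha \bar b b$ and for every $b\in \mathcal{N}$ there is $a\in\mathcal{N}$ with $\bar a a\sim_\alpha\bar b b$; for limit $\beta$, $\bar a\sim_\beta\bar b$ iff $\bar a\sim_\alpha\bar b$ for all $\alpha<\beta$. $\mathrm{SR}(\bar a,\bar b)$ is the least ordinal $\mu$ with $\neg(\bar a\sim_\mu\bar b)$, or $\infty$ if none exists. $\mathrm{SR}(\bar a)=\sup\{\mathrm{SR}(\bar a,\bar b): \bar b\in {}^{|\bar a|}\mathcal{N},\ \mathrm{SR}(\bar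 a,\bar b)\neq\infty\}$ and $\mathrm{SR}(\mathcal{N})=\sup\{\mathrm{SR}(\bar a)+1:\bar a\in{}^{<\omega}\mathcal{N}\}$. The metric space $\mathcal{M}$ on $\omega$ is regarded as a real by coding the interpretations of all symbols of $\mathscr{U}$ in a fixed recursive way. For a real $x$, $\omega_1^x$ is the least ordinal $\alpha$ with $L_\alpha(x)\models\mathsf{KP}$ (equivalently, the least ordinal that is not the order type of a well-ordering of $\omega$ computable from $x$). *)

theory Defs
  imports "HOL-Analysis.Analysis"
begin

datatype recf = RZero | RSucc | RProj nat | ROracle | RComp recf "recf list"
  | RPrimRec recf recf | RMinim recf

inductive eval :: "(nat \<Rightarrow> bool) \<Rightarrow> recf \<Rightarrow> nat list \<Rightarrow> nat \<Rightarrow> bool" for x where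
  eval_zero: "eval x RZero ns 0"
| eval_succ: "eval x RSucc (n # ns) (Suc n)"
| eval_proj: "k < length ns \<Longrightarrow> eval x (RProj k) ns (ns ! k)"
| eval_oracle: "eval x ROracle (n # ns) (if x n then 1 else 0)"
| eval_comp: "list_all2 (\<lambda>g m. eval x g ns m) gs ms \<Longrightarrow> eval x f ms r
      \<Longrightarrow> eval x (RComp f gs) ns r"
| eval_prec0: "eval x f ns r \<Longrightarrow> eval x (RPrimRec f g) (0 # ns) r"
| eval_precS: "eval x (RPrimRec f g) (n # ns) r \<Longrightarrow> eval x g (r # n # ns) r'
      \<Longrightarrow> eval x (RPrimRec f g) (Suc n # ns) r'"
| eval_minim: "eval x f (n # ns) 0 \<Longrightarrow> (\<forall>m<n. \<exists>r. 0 < r \<and> eval x f (m # ns) r)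
      \<Longrightarrow> eval x (RMinim f) ns n"

definition rel_computable_from :: "(nat \<Rightarrow> bool) \<Rightarrow> nat rel \<Rightarrow> bool" where
  "rel_computable_from x R \<longleftrightarrow>
     (\<exists>f. \<forall>a b. eval x f [a, b] (if (a, b) \<in> R then 1 else 0))"

text \<open>An element mu of Field W stands for the ordinal which is the order type of
  its set of strict W-predecessors.\<close>

definition is_pred_of :: "'o rel \<Rightarrow> 'o \<Rightarrow> 'o \<Rightarrow> bool" where
  "is_pred_of W nu mu \<longleftrightarrow> nu \<in> underS W mu \<and> (\<forall>xi \<in> underS W mu. (xi, nu) \<in> W)"

definition omega1_in :: "'o rel \<Rightarrow> (nat \<Rightarrow> bool) \<Rightarrow> 'o" where
  "omega1_in W x = wo_rel.minim W {mu \<in> Field W.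
      \<not> (\<exists>R. Well_order R \<and> rel_computable_from x R \<and> (R, Restr W (underS W mu)) \<in> ordIso)}"

text \<open>Partial U-isomorphism a_i \<mapsto> b_i, U = {d_q, d^q : q \<in> Q+}.\<close>
definition piso :: "'p::metric_space list \<Rightarrow> 'p list \<Rightarrow> bool" where
  "piso as bs \<longleftrightarrow> length as = length bs \<and>
     (\<forall>i < length as. \<forall>j < length as.
        (as ! i = as ! j \<longleftrightarrow> bs ! i = bs ! j) \<and>
        (\<forall>q::rat. 0 < q \<longrightarrow>
           (dist (as ! i) (as ! j) < of_rat q \<longleftrightarrow> dist (bs ! i) (bs ! j) < of_rat q) \<and>
           (dist (as ! i) (as ! j) > of_rat q \<longleftrightarrow> dist (bs ! i) (bs ! j) > of_rat q)))"

definition bf_step :: "'o rel \<Rightarrow> ('o \<Rightarrow> 'p::metric_space list \<Rightarrow> 'p list \<Rightarrow> bool)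
    \<Rightarrow> 'o \<Rightarrow> 'p list \<Rightarrow> 'p list \<Rightarrow> bool" where
  "bf_step W rec mu as bs =
    (if underS W mu = {} then piso as bs
     else if (\<exists>nu. is_pred_of W nu mu) then
       (let nu = (THE nu. is_pred_of W nu mu) in
         (\<forall>a. \<exists>b. rec nu (as @ [a]) (bs @ [b])) \<and> (\<forall>b. \<exists>a. rec nu (as @ [a]) (bs @ [b])))
     else (\<forall>nu \<in> underS W mu. rec nu as bs))"

definition bf :: "'o rel \<Rightarrow> 'o \<Rightarrow> 'p::metric_space list \<Rightarrow> 'p list \<Rightarrow> bool" where
  "bf W = wfrec (W - Id) (bf_step W)"

text \<open>SR(a,b); None stands for \<infinity>.\<close>
definition SR_pair :: "'o rel \<Rightarrow> 'p::metric_space list \<Rightarrow> 'p list \<Rightarrow> 'o option" where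
  "SR_pair W as bs =
    (if \<exists>mu \<in> Field W. \<not> bf W mu as bs
     then Some (wo_rel.minim W {mu \<in> Field W. \<not> bf W mu as bs}) else None)"

definition SR_tuple :: "'o rel \<Rightarrow> 'p::metric_space list \<Rightarrow> 'o" where
  "SR_tuple W as = wo_rel.supr W
     {mu. \<exists>bs. length bs = length as \<and> SR_pair W as bs = Some mu}"

definition SR_struct :: "'o rel \<Rightarrow> 'p::metric_space itself \<Rightarrow> 'o" where
  "SR_struct W _ = wo_rel.supr W
     {wo_rel.suc W {SR_tuple W (as :: 'p list)} | as. True}"

text \<open>The ambient well-order used to represent ordinals: a cardinal well-order on
  'p list set, of order type 2^|'p list|, which exceeds every ordinal < |'p list|^+
  (hence all the Scott ranks of the structure on 'p, and all the suprema involved).\<close>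
abbreviation ordW :: "'p itself \<Rightarrow> ('p list set) rel" where
  "ordW _ \<equiv> card_of (UNIV :: 'p list set set)"

text \<open>Fixed recursive enumeration of Q+ (with repetitions).\<close>
definition qpos :: "nat \<Rightarrow> rat" where
  "qpos n = (case prod_decode n of (a, b) \<Rightarrow> of_nat (Suc a) / of_nat (Suc b))"

text \<open>Bit 2<<n,i>,j> codes d_{q_n}(i,j); bit 2<<n,i>,j>+1 codes d^{q_n}(i,j).\<close>
definition code_metric :: "(nat \<Rightarrow> nat \<Rightarrow> real) \<Rightarrow> nat \<Rightarrow> bool" where
  "code_metric d m =
    (case prod_decode (m div 2) of (ni, j) \<Rightarrow> (case prod_decode ni of (n, i) \<Rightarrow>
      if even m then d i j < of_rat (qpos n) else d i j > of_rat (qpos n)))"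

definition is_metric_on_nat :: "(nat \<Rightarrow> nat \<Rightarrow> real) \<Rightarrow> bool" where
  "is_metric_on_nat d \<longleftrightarrow>
     (\<forall>i j. 0 \<le> d i j) \<and> (\<forall>i j. d i j = 0 \<longleftrightarrow> i = j) \<and> (\<forall>i j. d i j = d j i) \<and>
     (\<forall>i j k. d i k \<le> d i j + d j k)"

definition is_completion :: "(nat \<Rightarrow> nat \<Rightarrow> real) \<Rightarrow> (nat \<Rightarrow> 'p::metric_space) \<Rightarrow> bool" where
  "is_completion d e \<longleftrightarrow> (\<forall>i j. dist (e i) (e j) = d i j) \<and>
     closure (range e) = UNIV \<and> complete (UNIV :: 'p set)"

end

theory Submission
  imports Defs
begin

(* In a proper space the back-and-forth relations stabilise at level omega. The finite-level
   relations ~n are closed under limits of tuples, and a witness b for a new point a with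
   xs a ~n ys b satisfies d(b, ys!0) = d(a, xs!0), so witnesses for all levels lie in one closed
   ball and a subsequence converges; its limit witnesses every level at once. Hence ~omega
   implies ~(omega+1), and by induction ~omega implies ~mu for every mu. So every SR(as, bs)
   other than infinity is finite, SR(as) <= omega and SR(C(M)) <= omega + 1. Since every finite
   order is computable, omega <= omega_1^x for every oracle x, which gives the bound. *)

definition same_dists :: "'p::metric_space list \<Rightarrow> 'p list \<Rightarrow> bool" where
  "same_dists xs ys \<longleftrightarrow> length xs = length ys \<and>
     (\<forall>i<length xs. \<forall>j<length xs. dist (xs ! i) (xs ! j) = dist (ys ! i) (ys ! j))"

lemma piso_iff_same_dists: "piso xs ys \<longleftrightarrow> same_dists xs ys"
proof
  assume iso: "piso xs ys"
  have "dist (xs ! i) (xs ! j) = dist (ys ! i) (ys ! j)"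
    if ij: "i < length xs" "j < length xs" for i j
  proof (rule ccontr)
    let ?u = "dist (xs ! i) (xs ! j)" and ?v = "dist (ys ! i) (ys ! j)"
    assume "?u \<noteq> ?v"
    then have "min ?u ?v < max ?u ?v" by linarith
    then obtain q where q: "min ?u ?v < of_rat q" "of_rat q < max ?u ?v"
      using of_rat_dense by blast
    moreover have "0 \<le> min ?u ?v" by simp
    ultimately have "0 < (of_rat q :: real)" by linarith
    then have "?u < of_rat q \<longleftrightarrow> ?v < of_rat q"
      using iso ij unfolding piso_def by simp
    with q show False by linarith
  qed
  with iso show "same_dists xs ys" by (simp add: piso_def same_dists_def)
next
  assume "same_dists xs ys"
  then show "piso xs ys"
    unfolding piso_def same_dists_def by (metis dist_eq_0_iff)
qed

lemma same_dists_snocD: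
  assumes "same_dists (xs @ [a]) (ys @ [b])"
  shows "same_dists xs ys" and "i < length xs \<Longrightarrow> dist a (xs ! i) = dist b (ys ! i)"
proof -
  have len: "length xs = length ys" using assms by (simp add: same_dists_def)
  have dist: "dist ((xs @ [a]) ! i) ((xs @ [a]) ! j) = dist ((ys @ [b]) ! i) ((ys @ [b]) ! j)"
    if "i \<le> length xs" "j \<le> length xs" for i j
    using assms that unfolding same_dists_def by simp
  show "same_dists xs ys"
    unfolding same_dists_def
  proof (intro conjI allI impI len)
    fix i j assume "i < length xs" "j < length xs"
    then show "dist (xs ! i) (xs ! j) = dist (ys ! i) (ys ! j)"
      using len dist[of i j] by (simp add: nth_append)
  qed
  show "dist a (xs ! i) = dist b (ys ! i)" if "i < length xs"
    using len dist[of "length xs" i] that by (simp add: nth_append)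
qed

definition forth :: "('a list \<Rightarrow> 'a list \<Rightarrow> bool) \<Rightarrow> 'a list \<Rightarrow> 'a list \<Rightarrow> bool" where
  "forth R xs ys \<longleftrightarrow> (\<forall>a. \<exists>b. R (xs @ [a]) (ys @ [b]))"

(* The relations ~n of the paper for finite n, with piso replaced by same_dists (see
   piso_iff_same_dists). *)
fun bf_nat :: "nat \<Rightarrow> 'p::metric_space list \<Rightarrow> 'p list \<Rightarrow> bool" where
  "bf_nat 0 xs ys \<longleftrightarrow> same_dists xs ys"
| "bf_nat (Suc n) xs ys \<longleftrightarrow> forth (bf_nat n) xs ys \<and> forth (bf_nat n)\<inverse>\<inverse> ys xs"

lemma bf_nat_refl: "bf_nat n xs xs"
  by (induction n arbitrary: xs) (auto simp: same_dists_def forth_def)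

lemma bf_nat_sym: "bf_nat n xs ys \<Longrightarrow> bf_nat n ys xs"
  by (induction n arbitrary: xs ys) (simp_all add: same_dists_def forth_def, blast)

lemma bf_nat_Suc_iff: "bf_nat (Suc n) xs ys \<longleftrightarrow> forth (bf_nat n) xs ys \<and> forth (bf_nat n) ys xs"
  using bf_nat_sym unfolding bf_nat.simps forth_def by blast

lemma bf_nat_same_dists: "bf_nat n xs ys \<Longrightarrow> same_dists xs ys"
proof (induction n arbitrary: xs ys)
  case (Suc n)
  then obtain b where "bf_nat n (xs @ [undefined]) (ys @ [b])"
    unfolding bf_nat_Suc_iff forth_def by blast
  then show ?case by (rule same_dists_snocD(1)[OF Suc.IH])
qed simp

lemma bf_nat_SucD: "bf_nat (Suc n) xs ys \<Longrightarrow> bf_nat n xs ys"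
proof (induction n arbitrary: xs ys)
  case 0
  then show ?case using bf_nat_same_dists by (metis bf_nat.simps(1))
next
  case (Suc n)
  have "forth (bf_nat (Suc n)) xs ys" "forth (bf_nat (Suc n)) ys xs"
    using Suc.prems by (simp_all only: bf_nat_Suc_iff[of "Suc n"])
  then have "forth (bf_nat n) xs ys" "forth (bf_nat n) ys xs"
    using Suc.IH unfolding forth_def by blast+
  then show ?case by (simp only: bf_nat_Suc_iff)
qed

lemma bf_nat_antimono: "m \<le> n \<Longrightarrow> bf_nat n xs ys \<Longrightarrow> bf_nat m xs ys"
  by (induction n rule: dec_induct) (auto simp del: bf_nat.simps dest: bf_nat_SucD)

section \<open>Limits of tuples in proper spaces\<close>

definition tuple_tendsto :: "(nat \<Rightarrow> 'a::topological_space list) \<Rightarrow> 'a list \<Rightarrow> bool" where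
  "tuple_tendsto X x \<longleftrightarrow>
     (\<forall>k. length (X k) = length x) \<and> (\<forall>i<length x. (\<lambda>k. X k ! i) \<longlonglongrightarrow> x ! i)"

definition limit_closed :: "('a::topological_space list \<Rightarrow> 'a list \<Rightarrow> bool) \<Rightarrow> bool" where
  "limit_closed R \<longleftrightarrow>
     (\<forall>X Y x y. (\<forall>k. R (X k) (Y k)) \<longrightarrow> tuple_tendsto X x \<longrightarrow> tuple_tendsto Y y \<longrightarrow> R x y)"

lemma limit_closedI:
  "(\<And>X Y x y. (\<And>k. R (X k) (Y k)) \<Longrightarrow> tuple_tendsto X x \<Longrightarrow> tuple_tendsto Y y \<Longrightarrow> R x y)
    \<Longrightarrow> limit_closed R"
  unfolding limit_closed_def by blast

lemma limit_closedD:
  "limit_closed R \<Longrightarrow> (\<And>k. R (X k) (Y k)) \<Longrightarrow> tuple_tendsto X x \<Longrightarrow> tuple_tendsto Y y \<Longrightarrow> R x y"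
  unfolding limit_closed_def by blast

lemma tuple_tendsto_const: "tuple_tendsto (\<lambda>k. x) x"
  by (simp add: tuple_tendsto_def)

lemma tuple_tendsto_snoc:
  assumes "tuple_tendsto X x" and "c \<longlonglongrightarrow> l"
  shows "tuple_tendsto (\<lambda>k. X k @ [c k]) (x @ [l])"
  using assms unfolding tuple_tendsto_def by (auto simp: nth_append less_Suc_eq)

lemma tuple_tendsto_subseq:
  assumes "tuple_tendsto X x" and "strict_mono \<sigma>"
  shows "tuple_tendsto (\<lambda>k. X (\<sigma> k)) x"
  using assms LIMSEQ_subseq_LIMSEQ unfolding tuple_tendsto_def o_def by fastforce

lemma same_dists_limit_closed: "limit_closed same_dists"
proof (rule limit_closedI)
  fix X Y :: "nat \<Rightarrow> 'a list" and x y
  assume XY: "\<And>k. same_dists (X k) (Y k)" and X: "tuple_tendsto X x" and Y: "tuple_tendsto Y y"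
  have len: "length x = length y"
    using XY X Y by (simp add: same_dists_def tuple_tendsto_def)
  have "dist (x ! i) (x ! j) = dist (y ! i) (y ! j)" if "i < length x" "j < length x" for i j
  proof (rule LIMSEQ_unique)
    show "(\<lambda>k. dist (X k ! i) (X k ! j)) \<longlonglongrightarrow> dist (x ! i) (x ! j)"
      using X that by (intro tendsto_dist) (simp_all add: tuple_tendsto_def)
    have "(\<lambda>k. dist (Y k ! i) (Y k ! j)) \<longlonglongrightarrow> dist (y ! i) (y ! j)"
      using Y that len by (intro tendsto_dist) (simp_all add: tuple_tendsto_def)
    moreover have "dist (X k ! i) (X k ! j) = dist (Y k ! i) (Y k ! j)" for k
      using XY X that by (simp add: same_dists_def tuple_tendsto_def)
    ultimately show "(\<lambda>k. dist (X k ! i) (X k ! j)) \<longlonglongrightarrow> dist (y ! i) (y ! j)"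
      by simp
  qed
  with len show "same_dists x y" by (simp add: same_dists_def)
qed

lemma proper_bounded_convergent_subseq:
  fixes c :: "nat \<Rightarrow> 'p::metric_space"
  assumes "\<forall>(x::'p) r. compact (cball x r)" and "bounded (range c)"
  obtains l \<sigma> where "strict_mono \<sigma>" and "(c \<circ> \<sigma>) \<longlonglongrightarrow> l"
proof -
  obtain z r where "range c \<subseteq> cball z r"
    using assms(2) bounded_subset_cball by blast
  moreover have "seq_compact (cball z r)"
    using assms(1) compact_imp_seq_compact by blast
  ultimately show ?thesis
    using that unfolding seq_compact_def by blast
qed

lemma snoc_witnesses_bounded:
  fixes c :: "nat \<Rightarrow> 'p::metric_space"
  assumes dists: "\<And>n. same_dists (X n @ [a]) (Y n @ [c n])"
    and X: "tuple_tendsto X x" and Y: "tuple_tendsto Y y" and "x \<noteq> []"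
  shows "bounded (range c)"
proof -
  have len: "length (X n) = length x" "length (Y n) = length x" for n
    using X Y dists[of n] by (simp_all add: tuple_tendsto_def same_dists_def)
  with \<open>x \<noteq> []\<close> have x0: "0 < length x" "0 < length y" "0 < length (X n)" for n
    using Y by (auto simp: tuple_tendsto_def)
  let ?bound = "\<lambda>n. dist a (X n ! 0) + dist (Y n ! 0) (y ! 0)"
  have "?bound \<longlonglongrightarrow> dist a (x ! 0) + dist (y ! 0) (y ! 0)"
    using X Y x0 by (intro tendsto_intros) (simp_all add: tuple_tendsto_def)
  then have "bounded (range ?bound)"
    by (rule convergent_imp_bounded)
  then obtain K where "\<forall>r\<in>range ?bound. norm r \<le> K"
    unfolding bounded_iff by blast
  then have K: "\<bar>?bound n\<bar> \<le> K" for n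
    by simp
  have "dist (y ! 0) (c n) \<le> K" for n
  proof -
    have "dist (c n) (y ! 0) \<le> dist (c n) (Y n ! 0) + dist (Y n ! 0) (y ! 0)"
      by (rule dist_triangle)
    also have "dist (c n) (Y n ! 0) = dist a (X n ! 0)"
      using same_dists_snocD(2)[OF dists[of n], of 0] x0(3) by simp
    finally show ?thesis using K[of n] by (simp add: dist_commute)
  qed
  then show "bounded (range c)"
    unfolding bounded_def by (intro exI[of _ "y ! 0"] exI[of _ K]) simp
qed

lemma forth_limit:
  fixes R :: "nat \<Rightarrow> 'p::metric_space list \<Rightarrow> 'p list \<Rightarrow> bool"
  assumes proper: "\<forall>(x::'p) r. compact (cball x r)"
    and antimono: "\<And>m n xs ys. m \<le> n \<Longrightarrow> R n xs ys \<Longrightarrow> R m xs ys"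
    and closed: "\<And>n. limit_closed (R n)"
    and dists: "\<And>n xs ys. R n xs ys \<Longrightarrow> same_dists xs ys"
    and refl: "\<And>n xs. R n xs xs"
    and forth: "\<And>n. forth (R n) (X n) (Y n)"
    and X: "tuple_tendsto X x" and Y: "tuple_tendsto Y y"
  shows "forth (\<lambda>xs ys. \<forall>n. R n xs ys) x y"
  unfolding forth_def
proof
  fix a
  have "\<forall>n. \<exists>b. R n (X n @ [a]) (Y n @ [b])"
    using forth unfolding forth_def by blast
  then obtain c where c: "\<And>n. R n (X n @ [a]) (Y n @ [c n])"
    by metis
  have dists_c: "same_dists (X n @ [a]) (Y n @ [c n])" for n
    using dists c .
  have len: "length x = length y"
    using same_dists_snocD(1)[OF dists_c[of 0]] X Y by (simp add: same_dists_def tuple_tendsto_def)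
  show "\<exists>b. \<forall>n. R n (x @ [a]) (y @ [b])"
  proof (cases "x = []")
    case True
    with len refl show ?thesis by auto
  next
    case False
    with dists_c X Y have "bounded (range c)"
      by (rule snoc_witnesses_bounded)
    then obtain l \<sigma> where \<sigma>: "strict_mono \<sigma>" and l: "(c \<circ> \<sigma>) \<longlonglongrightarrow> l"
      using proper_bounded_convergent_subseq[OF proper] by blast
    have "R m (x @ [a]) (y @ [l])" for m
    proof -
      let ?\<tau> = "\<lambda>k. \<sigma> (k + m)"
      have \<tau>: "strict_mono ?\<tau>"
        using \<sigma> by (simp add: strict_mono_def)
      have "m \<le> ?\<tau> k" for k
        using seq_suble[OF \<sigma>, of "k + m"] by simp
      then have "R m (X (?\<tau> k) @ [a]) (Y (?\<tau> k) @ [c (?\<tau> k)])" for k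
        by (rule antimono[OF _ c])
      moreover have "tuple_tendsto (\<lambda>k. X (?\<tau> k) @ [a]) (x @ [a])"
        using tuple_tendsto_snoc[OF tuple_tendsto_subseq[OF X \<tau>] tendsto_const] .
      moreover have "(\<lambda>k. c (?\<tau> k)) \<longlonglongrightarrow> l"
        using LIMSEQ_ignore_initial_segment[OF l, of m] by (simp add: o_def)
      then have "tuple_tendsto (\<lambda>k. Y (?\<tau> k) @ [c (?\<tau> k)]) (y @ [l])"
        by (rule tuple_tendsto_snoc[OF tuple_tendsto_subseq[OF Y \<tau>]])
      ultimately show ?thesis
        by (rule limit_closedD[OF closed])
    qed
    then show ?thesis by blast
  qed
qed

lemma bf_nat_limit_closed:
  assumes proper: "\<forall>(x::'p::metric_space) r. compact (cball x r)"
  shows "limit_closed (bf_nat n :: 'p list \<Rightarrow> 'p list \<Rightarrow> bool)"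
proof (induction n)
  case 0
  have "bf_nat 0 = same_dists" by (intro ext) simp
  then show ?case using same_dists_limit_closed by simp
next
  case (Suc n)
  show ?case
  proof (rule limit_closedI)
    fix X Y and x y :: "'p list"
    assume XY: "\<And>k. bf_nat (Suc n) (X k) (Y k)"
      and X: "tuple_tendsto X x" and Y: "tuple_tendsto Y y"
    have limit: "forth (bf_nat n) x' y'"
      if "\<And>k. forth (bf_nat n) (X' k) (Y' k)" "tuple_tendsto X' x'" "tuple_tendsto Y' y'"
      for X' Y' and x' y' :: "'p list"
      using forth_limit[where R = "\<lambda>_. bf_nat n" and X = X' and Y = Y' and x = x' and y = y',
          OF proper _ Suc bf_nat_same_dists bf_nat_refl] that by simp
    show "bf_nat (Suc n) x y"
      using XY limit[OF _ X Y] limit[OF _ Y X] unfolding bf_nat_Suc_iff by blast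
  qed
qed

lemma bf_nat_all_forth:
  assumes proper: "\<forall>(x::'p::metric_space) r. compact (cball x r)"
    and "\<forall>n. bf_nat n x (y :: 'p list)"
  shows "forth (\<lambda>xs ys. \<forall>n. bf_nat n xs ys) x y"
proof (rule forth_limit[OF proper bf_nat_antimono bf_nat_limit_closed[OF proper]
      bf_nat_same_dists bf_nat_refl _ tuple_tendsto_const tuple_tendsto_const])
  show "forth (bf_nat n) x y" for n
    using assms(2) bf_nat_Suc_iff by blast
qed

section \<open>The ordinal-indexed relations\<close>

lemma is_pred_of_THE:
  assumes "Well_order W" and "is_pred_of W nu mu"
  shows "(THE nu. is_pred_of W nu mu) = nu"
proof (rule the_equality)
  fix nu' assume "is_pred_of W nu' mu"
  with assms(2) have "(nu', nu) \<in> W" "(nu, nu') \<in> W"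
    unfolding is_pred_of_def by blast+
  then show "nu' = nu"
    using assms(1) by (metis antisymD wo_rel.ANTISYM wo_rel_def)
qed (rule assms(2))

lemma adm_wf_bf_step:
  fixes W :: "'o rel"
  assumes W: "Well_order W"
  shows "adm_wf (W - Id) (bf_step W :: ('o \<Rightarrow> 'p::metric_space list \<Rightarrow> 'p list \<Rightarrow> bool) \<Rightarrow> _)"
  unfolding adm_wf_def
proof (intro allI impI)
  fix F G :: "'o \<Rightarrow> 'p list \<Rightarrow> 'p list \<Rightarrow> bool" and mu
  assume "\<forall>nu. (nu, mu) \<in> W - Id \<longrightarrow> F nu = G nu"
  then have FG: "F nu = G nu" if "nu \<in> underS W mu" for nu
    using that unfolding underS_def by auto
  show "bf_step W F mu = bf_step W G mu"
  proof (cases "\<exists>nu. is_pred_of W nu mu")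
    case True
    then obtain nu where nu: "is_pred_of W nu mu" by blast
    then have "nu \<in> underS W mu" by (simp add: is_pred_of_def)
    then show ?thesis
      unfolding bf_step_def using nu FG is_pred_of_THE[OF W nu] by (simp add: Let_def)
  next
    case False
    then show ?thesis
      unfolding bf_step_def using FG by (intro ext) auto
  qed
qed

lemma bf_unfold: "Well_order W \<Longrightarrow> bf W = bf_step W (bf W)"
  unfolding bf_def
  by (rule wfrec_fixpoint[OF _ adm_wf_bf_step]) (simp_all add: wo_rel.WF wo_rel_def)

lemma bf_zero:
  "Well_order W \<Longrightarrow> underS W mu = {} \<Longrightarrow> bf W mu xs ys \<longleftrightarrow> same_dists xs ys"
  by (subst bf_unfold) (simp_all add: bf_step_def piso_iff_same_dists)

lemma bf_succ:
  assumes W: "Well_order W" and "is_pred_of W nu mu"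
  shows "bf W mu xs ys \<longleftrightarrow> forth (bf W nu) xs ys \<and> forth (bf W nu)\<inverse>\<inverse> ys xs"
proof -
  have "underS W mu \<noteq> {}"
    using assms(2) unfolding is_pred_of_def by blast
  then show ?thesis
    using assms is_pred_of_THE[OF assms]
    by (subst bf_unfold[OF W]) (auto simp: bf_step_def forth_def Let_def)
qed

lemma bf_limit:
  assumes "Well_order W" and "underS W mu \<noteq> {}" and "\<nexists>nu. is_pred_of W nu mu"
  shows "bf W mu xs ys \<longleftrightarrow> (\<forall>nu\<in>underS W mu. bf W nu xs ys)"
  using assms by (subst bf_unfold) (simp_all add: bf_step_def)

lemma bf_if_all_bf_nat:
  fixes xs ys :: "'p::metric_space list"
  assumes W: "Well_order W" and proper: "\<forall>(x::'p) r. compact (cball x r)"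
    and "\<forall>n. bf_nat n xs ys"
  shows "bf W mu xs ys"
  using assms(3)
proof (induction mu arbitrary: xs ys rule: wf_induct_rule[OF wo_rel.WF[unfolded wo_rel_def, OF W]])
  case (1 mu)
  consider "underS W mu = {}" | nu where "is_pred_of W nu mu"
    | "underS W mu \<noteq> {}" "\<nexists>nu. is_pred_of W nu mu"
    by blast
  then show ?case
  proof cases
    case 1
    then show ?thesis using \<open>\<forall>n. bf_nat n xs ys\<close> bf_zero[OF W] by (metis bf_nat.simps(1))
  next
    case (2 nu)
    then have "(nu, mu) \<in> W - Id"
      unfolding is_pred_of_def underS_def by blast
    then have IH: "\<And>xs ys :: 'p list. \<forall>n. bf_nat n xs ys \<Longrightarrow> bf W nu xs ys"
      using "1.IH" by blast
    have "forth (\<lambda>xs ys. \<forall>n. bf_nat n xs ys) xs ys" "forth (\<lambda>xs ys. \<forall>n. bf_nat n xs ys) ys xs"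
      using "1.prems" bf_nat_sym by (blast intro: bf_nat_all_forth[OF proper])+
    then show ?thesis
      unfolding bf_succ[OF W 2] forth_def using IH bf_nat_sym by blast
  next
    case 3
    then show ?thesis
      using "1.IH" "1.prems" bf_limit[OF W] unfolding underS_def by blast
  qed
qed

lemma embed_natLeq_exists:
  assumes "Well_order W" and "infinite (Field W)"
  obtains f where "embed natLeq W f"
proof -
  have "(natLeq, card_of (Field W)) \<in> ordLeq"
    using assms(2) infinite_iff_natLeq_ordLeq by blast
  moreover have "(card_of (Field W), W) \<in> ordLeq"
    using assms(1) by (rule card_of_least)
  ultimately have "(natLeq, W) \<in> ordLeq"
    by (rule ordLeq_transitive)
  then show ?thesis
    using that unfolding ordLeq_def by blast
qed

lemma embed_natLeq_underS:
  assumes "embed natLeq W f"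
  shows "underS W (f n) = f ` {..<n}"
  using embed_underS[OF natLeq_Well_order assms, of n]
  by (simp add: Field_natLeq natLeq_underS_less bij_betw_def lessThan_def)

lemma embed_natLeq_mono:
  assumes "embed natLeq W f" and "m \<le> n"
  shows "(f m, f n) \<in> W"
  using embed_compat[OF assms(1)] assms(2) unfolding compat_def natLeq_def by blast

lemma embed_natLeq_is_pred_of:
  assumes "embed natLeq W f"
  shows "is_pred_of W (f n) (f (Suc n))"
  unfolding is_pred_of_def embed_natLeq_underS[OF assms]
  using embed_natLeq_mono[OF assms] by auto

lemma bf_embed_natLeq:
  assumes W: "Well_order W" and f: "embed natLeq W f"
  shows "bf W (f n) = bf_nat n"
proof (induction n)
  case 0
  show ?case
    using bf_zero[OF W] embed_natLeq_underS[OF f, of 0] by (intro ext) simp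
next
  case (Suc n)
  show ?case
    by (intro ext) (simp add: bf_succ[OF W embed_natLeq_is_pred_of[OF f]] Suc)
qed

lemma SR_pair_finite_underS:
  fixes xs ys :: "'p::metric_space list"
  assumes W: "Well_order W" and inf: "infinite (Field W)"
    and proper: "\<forall>(x::'p) r. compact (cball x r)"
    and "SR_pair W xs ys = Some mu"
  shows "mu \<in> Field W" and "finite (underS W mu)"
proof -
  let ?S = "{mu \<in> Field W. \<not> bf W mu xs ys}"
  have S: "?S \<noteq> {}" and mu: "mu = wo_rel.minim W ?S"
    using assms(4) unfolding SR_pair_def by (auto split: if_splits)
  have wo: "wo_rel W" using W by (simp add: wo_rel_def)
  show "mu \<in> Field W"
    using wo_rel.minim_inField[OF wo _ S] mu by blast
  obtain f where f: "embed natLeq W f"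
    using embed_natLeq_exists[OF W inf] .
  obtain n where "\<not> bf_nat n xs ys"
    using S bf_if_all_bf_nat[OF W proper] by blast
  moreover have "f n \<in> Field W"
    using embed_Field[OF f] by (auto simp: Field_natLeq)
  ultimately have "f n \<in> ?S"
    by (simp add: bf_embed_natLeq[OF W f])
  then have "(mu, f n) \<in> W"
    using wo_rel.minim_least[OF wo, of ?S] mu by blast
  then have "underS W mu \<subseteq> f ` {..<n}"
    using underS_incr wo_rel.TRANS[OF wo] wo_rel.ANTISYM[OF wo] embed_natLeq_underS[OF f] by metis
  then show "finite (underS W mu)"
    using finite_subset by blast
qed

section \<open>Computability of finite orders\<close>

lemma eval_projI: "k < length ns \<Longrightarrow> v = ns ! k \<Longrightarrow> eval x (RProj k) ns v"
  using eval_proj by simp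

lemma eval_comp1: "eval x g ns m \<Longrightarrow> eval x f [m] r \<Longrightarrow> eval x (RComp f [g]) ns r"
  by (rule eval_comp[where ms = "[m]"]) simp_all

lemma eval_comp2:
  "eval x g1 ns m1 \<Longrightarrow> eval x g2 ns m2 \<Longrightarrow> eval x f [m1, m2] r \<Longrightarrow> eval x (RComp f [g1, g2]) ns r"
  by (rule eval_comp[where ms = "[m1, m2]"]) simp_all

definition recf_pred :: recf where
  "recf_pred = RPrimRec RZero (RProj 1)"

lemma eval_recf_pred: "eval x recf_pred [n] (n - 1)"
proof (induction n)
  case 0
  show ?case unfolding recf_pred_def using eval_prec0[OF eval_zero] by simp
next
  case (Suc n)
  show ?case unfolding recf_pred_def
    by (rule eval_precS[OF Suc[unfolded recf_pred_def]], rule eval_projI) simp_all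
qed

definition recf_monus :: recf where
  "recf_monus = RPrimRec (RProj 0) (RComp recf_pred [RProj 0])"

lemma eval_recf_monus: "eval x recf_monus [k, a] (a - k)"
proof (induction k)
  case 0
  show ?case unfolding recf_monus_def by (simp, rule eval_prec0, rule eval_projI) simp_all
next
  case (Suc k)
  have "eval x (RComp recf_pred [RProj 0]) [a - k, k, a] (a - k - 1)"
    by (rule eval_comp1[OF _ eval_recf_pred], rule eval_projI) simp_all
  then have "eval x (RComp recf_pred [RProj 0]) [a - k, k, a] (a - Suc k)"
    by simp
  then show ?case
    using eval_precS[OF Suc[unfolded recf_monus_def]] unfolding recf_monus_def by blast
qed

definition recf_is_zero :: recf where
  "recf_is_zero = RPrimRec (RComp RSucc [RZero]) RZero"

lemma eval_recf_is_zero: "eval x recf_is_zero [m] (if m = 0 then 1 else 0)"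
proof (induction m)
  case 0
  have "eval x (RComp RSucc [RZero]) [] 1"
    using eval_comp1[OF eval_zero eval_succ] by simp
  then show ?case unfolding recf_is_zero_def by (simp add: eval_prec0)
next
  case (Suc m)
  show ?case
    using eval_precS[OF Suc[unfolded recf_is_zero_def] eval_zero] unfolding recf_is_zero_def by simp
qed

definition recf_cond :: recf where
  "recf_cond = RPrimRec RZero (RProj 2)"

lemma eval_recf_cond: "eval x recf_cond [p, q] (if p = 0 then 0 else q)"
proof (induction p)
  case 0
  show ?case unfolding recf_cond_def using eval_prec0[OF eval_zero] by simp
next
  case (Suc p)
  have "eval x (RProj 2) [if p = 0 then 0 else q, p, q] q"
    by (rule eval_projI) simp_all
  then show ?case
    using eval_precS[OF Suc[unfolded recf_cond_def]] unfolding recf_cond_def by simp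
qed

primrec recf_const :: "nat \<Rightarrow> recf" where
  "recf_const 0 = RZero"
| "recf_const (Suc n) = RComp RSucc [recf_const n]"

lemma eval_recf_const: "eval x (recf_const n) ns n"
  by (induction n) (simp_all add: eval_zero eval_comp1[OF _ eval_succ])

lemma natLeq_on_rel_computable: "rel_computable_from x (natLeq_on n)"
  unfolding rel_computable_from_def
proof (intro exI allI)
  fix a b :: nat
  let ?f = "RComp recf_cond [RComp recf_monus [RProj 1, recf_const n],
                            RComp recf_is_zero [RComp recf_monus [RProj 1, RProj 0]]]"
  have "eval x (RComp recf_monus [RProj 1, recf_const n]) [a, b] (n - b)"
    by (rule eval_comp2[OF eval_projI eval_recf_const eval_recf_monus]) simp_all
  moreover have "eval x (RComp recf_monus [RProj 1, RProj 0]) [a, b] (a - b)"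
    by (rule eval_comp2[OF eval_projI eval_projI eval_recf_monus]) simp_all
  ultimately have "eval x ?f [a, b] (if n - b = 0 then 0 else if a - b = 0 then 1 else 0)"
    by (intro eval_comp2[OF _ eval_comp1[OF _ eval_recf_is_zero] eval_recf_cond])
  moreover have "(if n - b = 0 then 0 else if a - b = 0 then 1 else 0) =
      (if (a, b) \<in> natLeq_on n then 1 else (0::nat))"
    by auto
  ultimately show "eval x ?f [a, b] (if (a, b) \<in> natLeq_on n then 1 else 0)"
    by simp
qed

lemma list_all2_unique_right:
  "list_all2 (\<lambda>a b. P a b \<and> (\<forall>b'. P a b' \<longrightarrow> b = b')) xs ys \<Longrightarrow> list_all2 P xs zs \<Longrightarrow> ys = zs"
  by (induction xs arbitrary: ys zs) (auto simp: list_all2_Cons1)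

inductive_cases eval_RZeroE: "eval x RZero ns r"
inductive_cases eval_RSuccE: "eval x RSucc ns r"
inductive_cases eval_RProjE: "eval x (RProj k) ns r"
inductive_cases eval_ROracleE: "eval x ROracle ns r"
inductive_cases eval_RCompE: "eval x (RComp f gs) ns r"
inductive_cases eval_RPrimRec0E: "eval x (RPrimRec f g) (0 # ns) r"
inductive_cases eval_RPrimRecSucE: "eval x (RPrimRec f g) (Suc n # ns) r"
inductive_cases eval_RMinimE: "eval x (RMinim f) ns r"

lemma eval_deterministic: "eval x f ns r \<Longrightarrow> \<forall>r'. eval x f ns r' \<longrightarrow> r = r'"
proof (induction rule: eval.induct)
  case (eval_comp ns gs ms f r)
  show ?case
  proof (intro allI impI)
    fix r' assume "eval x (RComp f gs) ns r'"
    then obtain ms' where "list_all2 (\<lambda>g m. eval x g ns m) gs ms'" and "eval x f ms' r'"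
      by (rule eval_RCompE)
    with eval_comp.IH show "r = r'"
      using list_all2_unique_right[of "\<lambda>g m. eval x g ns m" gs ms ms'] by blast
  qed
next
  case (eval_minim f n ns)
  show ?case
  proof (intro allI impI)
    fix n' assume "eval x (RMinim f) ns n'"
    then have n': "eval x f (n' # ns) 0" "\<forall>m<n'. \<exists>r>0. eval x f (m # ns) r"
      by (auto elim: eval_RMinimE)
    show "n = n'"
    proof (rule linorder_cases)
      assume "n < n'"
      then show ?thesis using eval_minim.IH(1) n'(2) by blast
    next
      assume "n' < n"
      then show ?thesis using eval_minim.IH(2) n'(1) by blast
    qed
  qed
qed (blast elim: eval_RZeroE eval_RSuccE eval_RProjE eval_ROracleE eval_RPrimRec0E eval_RPrimRecSucE)+

instance recf :: countable
  by countable_datatype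

lemma finite_Well_order_ordIso_natLeq_on:
  assumes "Well_order r" and "finite (Field r)"
  shows "(natLeq_on (card (Field r)), r) \<in> ordIso"
proof -
  let ?n = "card (Field r)"
  have "(natLeq_on ?n, card_of {x. x < ?n}) \<in> ordIso"
    using natLeq_on_Well_order[of ?n] card_of_well_order_on[of "{x. x < ?n}"]
    by (intro finite_well_order_on_ordIso[of "{x. x < ?n}"]) (simp_all add: Field_natLeq_on)
  moreover have "(card_of {x. x < ?n}, card_of (Field r)) \<in> ordIso"
  proof -
    obtain h where "bij_betw h {0..<?n} (Field r)"
      using ex_bij_betw_nat_finite[OF assms(2)] by blast
    moreover have "{x. x < ?n} = {0..<?n}" by auto
    ultimately show ?thesis
      using card_of_ordIso by metis
  qed
  moreover have "(card_of (Field r), r) \<in> ordIso"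
    using assms card_of_well_order_on[of "Field r"]
    by (intro finite_well_order_on_ordIso[of "Field r"]) simp_all
  ultimately show ?thesis
    by (blast intro: ordIso_transitive)
qed

lemma Field_Restr_underS: "Well_order W \<Longrightarrow> Field (Restr W (underS W a)) = underS W a"
  by (simp add: Field_Restr_ofilter wo_rel.underS_ofilter wo_rel_def)

lemma finite_underS_le_infinite_underS:
  assumes W: "Well_order W" and "nu \<in> Field W" and "mu \<in> Field W"
    and "finite (underS W mu)" and "infinite (underS W nu)"
  shows "(mu, nu) \<in> W"
proof (rule ccontr)
  assume "(mu, nu) \<notin> W"
  then have "(nu, mu) \<in> W"
    using W assms(2,3) wo_rel.TOTALS by (fastforce simp: wo_rel_def)
  then have "underS W nu \<subseteq> underS W mu"
    using W by (intro underS_incr) (simp_all add: wo_rel.TRANS wo_rel.ANTISYM wo_rel_def)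
  with assms(4,5) show False
    using finite_subset by blast
qed

lemma Restr_underS_ordIso_imp_eq:
  assumes W: "Well_order W" and "a \<in> Field W" and "b \<in> Field W"
    and iso: "(Restr W (underS W a), Restr W (underS W b)) \<in> ordIso"
  shows "a = b"
proof -
  have wo: "wo_rel W" using W by (simp add: wo_rel_def)
  have of: "wo_rel.ofilter W (underS W a)" "wo_rel.ofilter W (underS W b)"
    by (simp_all add: wo_rel.underS_ofilter[OF wo])
  have "(Restr W (underS W a), Restr W (underS W b)) \<notin> ordLess"
    and "(Restr W (underS W b), Restr W (underS W a)) \<notin> ordLess"
    using iso not_ordLess_ordIso ordIso_symmetric by blast+
  then have "\<not> underS W a < underS W b" and "\<not> underS W b < underS W a"
    using ofilter_subset_ordLess[OF W of] ofilter_subset_ordLess[OF W of(2,1)] by simp_all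
  then have "underS W a = underS W b"
    using wo_rel.ofilter_linord[OF wo of] by blast
  then show "a = b"
    using wo_rel.suc_underS[OF wo] assms(2,3) by metis
qed

lemma Card_order_infinite_AboveS_nonempty:
  assumes co: "Card_order W" and inf: "infinite (Field W)" and a: "a \<in> Field W"
  shows "AboveS W {a} \<noteq> {}"
proof
  assume none_above: "AboveS W {a} = {}"
  have W: "Well_order W" using co by (simp add: card_order_on_def)
  have "Field W = insert a (underS W a)"
  proof (intro equalityI subsetI)
    fix b assume b: "b \<in> Field W"
    show "b \<in> insert a (underS W a)"
    proof (cases "b = a")
      case False
      with b none_above have "(a, b) \<notin> W" unfolding AboveS_def by blast
      with W a b have "(b, a) \<in> W" by (metis wo_rel.TOTALS wo_rel_def)
      with False show ?thesis unfolding underS_def by blast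
    qed simp
  qed (use a underS_Field in fast)
  then have "infinite (underS W a)" and "Field W = underS W a \<union> {a}"
    using inf by auto
  then obtain h where "bij_betw h (underS W a) (Field W)"
    using infinite_imp_bij_betw2 by metis
  then have "(card_of (underS W a), card_of (Field W)) \<in> ordIso"
    using card_of_ordIso by blast
  moreover have "(card_of (Field W), W) \<in> ordIso"
    using co by (rule card_of_Field_ordIso)
  ultimately have "(card_of (underS W a), W) \<in> ordIso"
    by (rule ordIso_transitive)
  then show False
    using card_of_underS[OF co a] not_ordLess_ordIso by blast
qed

lemma wo_rel_supr_least:
  assumes W: "Well_order W" and "b \<in> Field W" and "\<And>a. a \<in> A \<Longrightarrow> (a, b) \<in> W"
  shows "(wo_rel.supr W A, b) \<in> W"
proof -
  have wo: "wo_rel W" using W by (simp add: wo_rel_def)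
  have "b \<in> Above W A" and "Above W A \<subseteq> Field W"
    using assms(2,3) unfolding Above_def by blast+
  then show ?thesis
    unfolding wo_rel.supr_def[OF wo] by (rule wo_rel.minim_least[OF wo, rotated])
qed

lemma wo_rel_suc_mono:
  assumes W: "Well_order W" and ab: "(a, b) \<in> W" and above: "AboveS W {b} \<noteq> {}"
  shows "(wo_rel.suc W {a}, wo_rel.suc W {b}) \<in> W"
proof -
  have wo: "wo_rel W" using W by (simp add: wo_rel_def)
  let ?s = "wo_rel.suc W {b}"
  have "{b} \<subseteq> Field W" using ab by (simp add: FieldI2)
  then have "?s \<in> AboveS W {b}"
    using wo_rel.suc_AboveS[OF wo _ above] by blast
  then have s: "?s \<in> Field W" "?s \<noteq> b" "(b, ?s) \<in> W"
    unfolding AboveS_def by auto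
  have "(a, ?s) \<in> W"
    using ab s(3) wo_rel.TRANS[OF wo] by (meson transD)
  moreover have "?s \<noteq> a"
    using ab s(2,3) wo_rel.ANTISYM[OF wo] by (metis antisymD)
  ultimately have "?s \<in> AboveS W {a}"
    using s(1) unfolding AboveS_def by blast
  then show ?thesis
    using wo_rel.suc_least_AboveS[OF wo] by blast
qed

lemma uncountable_UNIV_set:
  assumes "infinite (UNIV :: 'a set)"
  shows "uncountable (UNIV :: 'a set set)"
proof
  assume "countable (UNIV :: 'a set set)"
  then have "(card_of (UNIV :: 'a set set), card_of (UNIV :: nat set)) \<in> ordLeq"
    unfolding countable_def using card_of_ordLeq by blast
  moreover have "(card_of (UNIV :: nat set), card_of (UNIV :: 'a set)) \<in> ordLeq"
    using assms infinite_iff_card_of_nat by blast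
  moreover have "(card_of (UNIV :: 'a set), card_of (UNIV :: 'a set set)) \<in> ordLess"
    using card_of_Pow[of "UNIV :: 'a set"] by simp
  ultimately have "(card_of (UNIV :: 'a set set), card_of (UNIV :: 'a set set)) \<in> ordLess"
    using ordLeq_transitive ordLeq_ordLess_trans by blast
  then show False
    using ordLess_irreflexive by blast
qed

lemma uncountable_Field_ex_noncomputable_segment:
  assumes W: "Well_order W" and unc: "uncountable (Field W)"
  shows "\<exists>mu\<in>Field W. \<not> (\<exists>R. Well_order R \<and> rel_computable_from x R \<and>
           (R, Restr W (underS W mu)) \<in> ordIso)"
(* Distinct positions have non-isomorphic initial segments, but there are only countably many
   programs. *)
proof (rule ccontr)
  assume "\<not> ?thesis"
  then have "\<forall>mu\<in>Field W. \<exists>f R. (R, Restr W (underS W mu)) \<in> ordIso \<and>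
      (\<forall>a b. eval x f [a, b] (if (a, b) \<in> R then 1 else 0))"
    unfolding rel_computable_from_def by blast
  then have "\<exists>prog. \<forall>mu\<in>Field W. \<exists>R. (R, Restr W (underS W mu)) \<in> ordIso \<and>
      (\<forall>a b. eval x (prog mu) [a, b] (if (a, b) \<in> R then 1 else 0))"
    by (rule bchoice)
  then obtain prog where "\<forall>mu\<in>Field W. \<exists>R. (R, Restr W (underS W mu)) \<in> ordIso \<and>
      (\<forall>a b. eval x (prog mu) [a, b] (if (a, b) \<in> R then 1 else 0))"
    by blast
  then have "\<exists>R. \<forall>mu\<in>Field W. (R mu, Restr W (underS W mu)) \<in> ordIso \<and>
      (\<forall>a b. eval x (prog mu) [a, b] (if (a, b) \<in> R mu then 1 else 0))"
    by (rule bchoice)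
  then obtain R where R: "\<And>mu. mu \<in> Field W \<Longrightarrow> (R mu, Restr W (underS W mu)) \<in> ordIso"
    and prog: "\<And>mu a b. mu \<in> Field W \<Longrightarrow> eval x (prog mu) [a, b] (if (a, b) \<in> R mu then 1 else 0)"
    by blast
  have "inj_on prog (Field W)"
  proof (rule inj_onI)
    fix mu nu assume mu: "mu \<in> Field W" and nu: "nu \<in> Field W" and "prog mu = prog nu"
    have "(if (a, b) \<in> R mu then 1 else 0) = (if (a, b) \<in> R nu then 1 else (0::nat))" for a b
      using eval_deterministic[OF prog[OF mu, of a b]] prog[OF nu, of a b] \<open>prog mu = prog nu\<close>
      by simp
    then have "(a, b) \<in> R mu \<longleftrightarrow> (a, b) \<in> R nu" for a b
      by (metis zero_neq_one)
    then have "R mu = R nu"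
      by (auto simp: set_eq_iff)
    then have "(Restr W (underS W mu), Restr W (underS W nu)) \<in> ordIso"
      using ordIso_transitive[OF ordIso_symmetric[OF R[OF mu]]] R[OF nu] by simp
    then show "mu = nu"
      using Restr_underS_ordIso_imp_eq[OF W mu nu] by blast
  qed
  then have "countable (Field W)"
    by (rule countable_image_inj_on[OF countableI_type])
  with unc show False by blast
qed

lemma omega1_in_infinite_underS:
  assumes W: "Well_order W"
    and ex: "\<exists>mu\<in>Field W. \<not> (\<exists>R. Well_order R \<and> rel_computable_from x R \<and>
               (R, Restr W (underS W mu)) \<in> ordIso)"
  shows "omega1_in W x \<in> Field W" and "infinite (underS W (omega1_in W x))"
proof -
  let ?om = "omega1_in W x"
  let ?S = "{mu \<in> Field W. \<not> (\<exists>R. Well_order R \<and> rel_computable_from x R \<and>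
               (R, Restr W (underS W mu)) \<in> ordIso)}"
  have S: "?S \<noteq> {}" using ex by blast
  have wo: "wo_rel W" using W by (simp add: wo_rel_def)
  have "?om \<in> ?S"
    unfolding omega1_in_def by (rule wo_rel.minim_in[OF wo _ S]) blast
  then have om: "?om \<in> Field W"
    and no_R: "\<not> (\<exists>R. Well_order R \<and> rel_computable_from x R \<and> (R, Restr W (underS W ?om)) \<in> ordIso)"
    by simp_all
  show "?om \<in> Field W" by (rule om)
  show "infinite (underS W ?om)"
  proof
    assume "finite (underS W ?om)"
    then have "(natLeq_on (card (underS W ?om)), Restr W (underS W ?om)) \<in> ordIso"
      using finite_Well_order_ordIso_natLeq_on[OF Well_order_Restr[OF W], of "underS W ?om"]
      by (simp add: Field_Restr_underS[OF W])
    with no_R show False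
      using natLeq_on_Well_order natLeq_on_rel_computable by blast
  qed
qed

lemma SR_struct_le_suc_omega1_in:
  fixes W :: "'o rel"
  assumes co: "Card_order W" and unc: "uncountable (Field W)"
    and proper: "\<forall>(x::'p::metric_space) r. compact (cball x r)"
  shows "(SR_struct W TYPE('p), wo_rel.suc W {omega1_in W x}) \<in> W"
proof -
  have W: "Well_order W" using co by (simp add: card_order_on_def)
  have inf: "infinite (Field W)" using unc countable_finite by blast
  define om where "om = omega1_in W x"
  have om: "om \<in> Field W" "infinite (underS W om)"
    unfolding om_def using omega1_in_infinite_underS[OF W uncountable_Field_ex_noncomputable_segment[OF W unc]]
    by blast+
  have "(SR_tuple W xs, om) \<in> W" for xs :: "'p list"
    unfolding SR_tuple_def
    using SR_pair_finite_underS[OF W inf proper] finite_underS_le_infinite_underS[OF W om(1) _ _ om(2)]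
    by (intro wo_rel_supr_least[OF W om(1)]) blast
  then have "(wo_rel.suc W {SR_tuple W xs}, wo_rel.suc W {om}) \<in> W" for xs :: "'p list"
    using wo_rel_suc_mono[OF W _ Card_order_infinite_AboveS_nonempty[OF co inf om(1)]] by blast
  moreover have "wo_rel.suc W {om} \<in> Field W"
    using wo_rel.suc_inField[of W "{om}"] Card_order_infinite_AboveS_nonempty[OF co inf om(1)] om(1) W
    by (simp add: wo_rel_def)
  ultimately show ?thesis
    unfolding SR_struct_def om_def[symmetric] by (intro wo_rel_supr_least[OF W]) blast+
qed

theorem theorem6p3:
  fixes d :: "nat \<Rightarrow> nat \<Rightarrow> real" and e :: "nat \<Rightarrow> 'p::metric_space"
  assumes "is_metric_on_nat d"
    and "is_completion d e"
    and "\<forall>(x::'p) r. compact (cball x r)"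
  shows "(SR_struct (ordW TYPE('p)) TYPE('p),
          wo_rel.suc (ordW TYPE('p)) {omega1_in (ordW TYPE('p)) (code_metric d)})
         \<in> ordW TYPE('p)"
proof (rule SR_struct_le_suc_omega1_in[OF card_of_Card_order _ assms(3)])
  show "uncountable (Field (card_of (UNIV :: 'p list set set)))"
    using uncountable_UNIV_set infinite_UNIV_listI by (simp add: Field_card_of)
qed

end
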